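(* Let $(\Omega,\mathcal F)$ be a measurable space with $\Sigma\neq\emptyset$, and let $v:\mathcal F\to\mathbb R$ be non-decreasing and submodular with $v(\emptyset)=0$. Then $v$ is continuous if and only if both of the following hold: (i) $\lim_{n\to\infty}v(A_n)=v(\bigcup_n A_n)$ for every sequence $A_1\subset A_2\subset\cdots$ in $\mathcal F$; (ii) $\lim_{n\to\infty}v(A_n)=v(\bigcap_n A_n)$ for every sequence $A_1\supset A_2\supset\cdots$ in $\mathcal F$.
   Context: $\Sigma$ denotes the set of all classes $\mathcal I\subset\mathcal F$ that are chains (totally ordered by inclusion), contain $\emptyset$ and $\Omega$, and generate $\mathcal F$ as a $\sigma$-algebra. $v$ is non-decreasing if $v(A)\le v(B)$ for $A\subset B$, submodular if $v(A)+v(B)\ge v(A\cup B)+v(A\cap B)$ for all $A,B\in\mathcal F$. For $\mathcal I\in\Sigma$ let $\mathcal J$ be the algebra generated by $\mathcal I$, whose elements are the sets $\bigcup_{i=1}^n (C_i\cap D_i^c)$ with $C_1\supset D_1\supset\cdots\supset C_n\supset D_n$ in $\mathcal I$; define $\mu_{v,\mathcal I}$ on $\mathcal J$ by $\mu_{v,\mathcal I}(\bigcup_{i=1}^n (C_i\cap D_i^c))=\sum_{i=1}^n(v(C_i)-v(D_i))$. A non-decreasing $v$ is called continuous if for every $\mathcal I\in\Sigma$ the finitely additive $\mu_{v,\mathcal I}$ is $\sigma$-additive on $\mathcal J$. *)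

theory Defs
  imports "HOL-Analysis.Analysis"
begin

definition chain_generators :: "'a measure \<Rightarrow> 'a set set set" where
  "chain_generators M = {I. I \<subseteq> sets M \<and> (\<forall>A\<in>I. \<forall>B\<in>I. A \<subseteq> B \<or> B \<subseteq> A)
      \<and> {} \<in> I \<and> space M \<in> I \<and> sigma_sets (space M) I = sets M}"

definition chain_rep :: "'a set set \<Rightarrow> nat \<Rightarrow> (nat \<Rightarrow> 'a set) \<Rightarrow> (nat \<Rightarrow> 'a set) \<Rightarrow> 'a set \<Rightarrow> bool" where
  "chain_rep I n C D A \<longleftrightarrow>
     (\<forall>i<n. C i \<in> I \<and> D i \<in> I \<and> D i \<subseteq> C i) \<and>
     (\<forall>i. Suc i < n \<longrightarrow> C (Suc i) \<subseteq> D i) \<and>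
     A = (\<Union>i<n. C i - D i)"

definition chain_algebra :: "'a set set \<Rightarrow> 'a set set" where
  "chain_algebra I = {A. \<exists>n C D. chain_rep I n C D A}"

definition mu_chain :: "('a set \<Rightarrow> real) \<Rightarrow> 'a set set \<Rightarrow> 'a set \<Rightarrow> real" where
  "mu_chain v I A = (SOME s. \<exists>n C D. chain_rep I n C D A \<and> s = (\<Sum>i<n. v (C i) - v (D i)))"

definition sigma_additive_on :: "'a set set \<Rightarrow> ('a set \<Rightarrow> real) \<Rightarrow> bool" where
  "sigma_additive_on J \<mu> \<longleftrightarrow> (\<forall>A :: nat \<Rightarrow> 'a set. range A \<subseteq> J \<longrightarrow> disjoint_family A \<longrightarrow>
      (\<Union>i. A i) \<in> J \<longrightarrow> (\<lambda>i. \<mu> (A i)) sums \<mu> (\<Union>i. A i))"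

definition nondecreasing_on :: "'a measure \<Rightarrow> ('a set \<Rightarrow> real) \<Rightarrow> bool" where
  "nondecreasing_on M v \<longleftrightarrow> (\<forall>A\<in>sets M. \<forall>B\<in>sets M. A \<subseteq> B \<longrightarrow> v A \<le> v B)"

definition submodular_on :: "'a measure \<Rightarrow> ('a set \<Rightarrow> real) \<Rightarrow> bool" where
  "submodular_on M v \<longleftrightarrow> (\<forall>A\<in>sets M. \<forall>B\<in>sets M. v A + v B \<ge> v (A \<union> B) + v (A \<inter> B))"

definition continuous_capacity :: "'a measure \<Rightarrow> ('a set \<Rightarrow> real) \<Rightarrow> bool" where
  "continuous_capacity M v \<longleftrightarrow>
     (\<forall>I\<in>chain_generators M. sigma_additive_on (chain_algebra I) (mu_chain v I))"

end

theory Submission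
  imports Defs
begin

text \<open>
  Fix a chain \<open>I\<close> in \<open>\<Sigma>\<close>. The differences \<open>C - D\<close> of members of \<open>I\<close> form a semiring of
  sets, on which \<open>C - D \<mapsto> v C - v D\<close> is a finitely additive volume; its extension to the
  generated ring agrees with \<open>\<mu>\<^bsub>v,I\<^esub>\<close> on \<open>J\<close>, which in particular shows that \<open>\<mu>\<^bsub>v,I\<^esub>\<close> is well
  defined. By submodularity this extension is dominated by \<open>v\<close>, so continuity of \<open>v\<close> along
  decreasing sequences with empty intersection makes it \<open>\<sigma>\<close>-additive.

  Conversely, a monotone sequence of measurable sets together with its limit can be put into
  a chain of \<open>\<Sigma>\<close>: the sequence cuts the space into countably many gaps, and refining a given
  chain of \<open>\<Sigma>\<close> inside each gap yields a chain that still generates the \<open>\<sigma>\<close>-algebra. In that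
  chain the differences of consecutive members of the sequence belong to \<open>J\<close>, and
  \<open>\<sigma>\<close>-additivity of \<open>\<mu>\<^bsub>v,I\<^esub>\<close> on them is the telescoping form of \<open>v(A\<^sub>n) \<rightarrow> v(lim A\<^sub>n)\<close>.
\<close>

definition chain_intervals :: "'a set set \<Rightarrow> 'a set set" where
  "chain_intervals I = {C - D | C D. C \<in> I \<and> D \<in> I \<and> D \<subseteq> C}"

text \<open>Arbitrary outside \<open>chain_intervals I\<close>; on intervals the value does not depend on the
  representation \<open>C - D\<close> (see \<open>interval_content_eq\<close>).\<close>
definition interval_content :: "('a set \<Rightarrow> real) \<Rightarrow> 'a set set \<Rightarrow> 'a set \<Rightarrow> real" where
  "interval_content v I c =
     (SOME s. \<exists>C D. C \<in> I \<and> D \<in> I \<and> D \<subseteq> C \<and> c = C - D \<and> s = v C - v D)"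

definition continuous_from_below :: "'a measure \<Rightarrow> ('a set \<Rightarrow> real) \<Rightarrow> bool" where
  "continuous_from_below M v \<longleftrightarrow>
     (\<forall>A. range A \<subseteq> sets M \<longrightarrow> incseq A \<longrightarrow> (\<lambda>n. v (A n)) \<longlonglongrightarrow> v (\<Union>n. A n))"

definition continuous_from_above :: "'a measure \<Rightarrow> ('a set \<Rightarrow> real) \<Rightarrow> bool" where
  "continuous_from_above M v \<longleftrightarrow>
     (\<forall>A. range A \<subseteq> sets M \<longrightarrow> decseq A \<longrightarrow> (\<lambda>n. v (A n)) \<longlonglongrightarrow> v (\<Inter>n. A n))"

lemma chain_intervalsI: "C \<in> I \<Longrightarrow> D \<in> I \<Longrightarrow> D \<subseteq> C \<Longrightarrow> C - D \<in> chain_intervals I"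
  unfolding chain_intervals_def by blast

lemma chain_intervalsE:
  assumes "c \<in> chain_intervals I"
  obtains C D where "C \<in> I" "D \<in> I" "D \<subseteq> C" "c = C - D"
  using assms unfolding chain_intervals_def by blast

lemma chain_rep_nested:
  assumes rep: "chain_rep I n C D A" and "i < j" "j < n"
  shows "C j \<subseteq> D i"
  using assms(2,3)
proof (induction j)
  case (Suc j)
  then have "C (Suc j) \<subseteq> D j" "i < j \<Longrightarrow> D j \<subseteq> C j"
    using rep unfolding chain_rep_def by auto
  with Suc show ?case
    by (cases "i = j") auto
qed simp

lemma chain_rep_disjoint:
  assumes "chain_rep I n C D A"
  shows "disjoint_family_on (\<lambda>i. C i - D i) {..<n}"
  unfolding disjoint_family_on_def
proof (intro ballI impI)
  fix i j assume "i \<in> {..<n}" "j \<in> {..<n}" "i \<noteq> j"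
  then have "C j \<subseteq> D i \<or> C i \<subseteq> D j"
    using chain_rep_nested[OF assms] by (cases "i < j") auto
  then show "(C i - D i) \<inter> (C j - D j) = {}" by blast
qed

locale set_chain =
  fixes I :: "'a set set"
  assumes chain: "A \<in> I \<Longrightarrow> B \<in> I \<Longrightarrow> A \<subseteq> B \<or> B \<subseteq> A"
    and empty_in_chain: "{} \<in> I"
begin

lemma Int_in_chain: "A \<in> I \<Longrightarrow> B \<in> I \<Longrightarrow> A \<inter> B \<in> I"
  using chain[of A B] by (auto simp: Int_absorb1 Int_absorb2)

lemma Un_in_chain: "A \<in> I \<Longrightarrow> B \<in> I \<Longrightarrow> A \<union> B \<in> I"
  using chain[of A B] by (auto simp: Un_absorb1 Un_absorb2)

lemma chain_interval_unique:
  assumes "C \<in> I" "D \<in> I" "C' \<in> I" "D' \<in> I" "D \<subseteq> C" "D' \<subseteq> C'"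
    and "C - D = C' - D'" "C - D \<noteq> {}"
  shows "C = C'" "D = D'"
proof -
  have top: "X \<subseteq> X'" if "X \<in> I" "Y \<in> I" "X' \<in> I" "Y' \<in> I" "Y \<subseteq> X" "Y' \<subseteq> X'"
    "X - Y = X' - Y'" "X - Y \<noteq> {}" for X Y X' Y'
    using that chain[of X X'] chain[of X' Y] by blast
  show "C = C'"
    using top[OF assms] top[OF assms(3,4,1,2,6,5)] assms(7,8) by auto
  then show "D = D'"
    using assms(5-7) by blast
qed

lemma interval_content_eq:
  assumes "C \<in> I" "D \<in> I" "D \<subseteq> C"
  shows "interval_content v I (C - D) = v C - v D"
  unfolding interval_content_def
proof (rule some_equality)
  fix s assume "\<exists>C' D'. C' \<in> I \<and> D' \<in> I \<and> D' \<subseteq> C' \<and> C - D = C' - D' \<and> s = v C' - v D'"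
  then obtain C' D' where C'D': "C' \<in> I" "D' \<in> I" "D' \<subseteq> C'" "C - D = C' - D'"
    and s: "s = v C' - v D'"
    by blast
  show "s = v C - v D"
  proof (cases "C - D = {}")
    case True
    then have "C = D" "C' = D'" using assms(3) C'D'(3,4) by blast+
    then show ?thesis using s by simp
  next
    case False
    then show ?thesis
      using chain_interval_unique[OF assms(1,2) C'D'(1,2) assms(3) C'D'(3,4)] s by simp
  qed
qed (use assms in blast)

lemma interval_content_empty: "interval_content v I {} = 0"
  using interval_content_eq[OF empty_in_chain empty_in_chain] by simp

lemma semiring_of_sets_chain_intervals:
  assumes "I \<subseteq> Pow \<Omega>"
  shows "semiring_of_sets \<Omega> (chain_intervals I)"
proof
  show "chain_intervals I \<subseteq> Pow \<Omega>"
    using assms by (auto elim!: chain_intervalsE)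
  show "{} \<in> chain_intervals I"
    using chain_intervalsI[OF empty_in_chain empty_in_chain] by simp
next
  fix a b assume "a \<in> chain_intervals I" "b \<in> chain_intervals I"
  then obtain C D C' D' where CD: "C \<in> I" "D \<in> I" "D \<subseteq> C" "a = C - D"
    and C'D': "C' \<in> I" "D' \<in> I" "D' \<subseteq> C'" "b = C' - D'"
    by (auto elim!: chain_intervalsE)
  have "a \<inter> b = (C \<inter> C') - ((D \<union> D') \<inter> C \<inter> C')"
    using CD C'D' by blast
  then show "a \<inter> b \<in> chain_intervals I"
    using CD C'D' by (auto intro!: chain_intervalsI Int_in_chain Un_in_chain)
  let ?a1 = "C - (C' \<union> D) \<inter> C" and ?a2 = "C \<inter> D' - D \<inter> D'"
  have "?a1 \<in> chain_intervals I" "?a2 \<in> chain_intervals I"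
    using CD C'D' by (auto intro!: chain_intervalsI Int_in_chain Un_in_chain)
  moreover have "a - b = ?a1 \<union> ?a2" "disjoint {?a1, ?a2}"
    using CD C'D' by (auto simp: disjoint_def)
  ultimately show "\<exists>Cs\<subseteq>chain_intervals I. finite Cs \<and> disjoint Cs \<and> a - b = \<Union>Cs"
    by (intro exI[of _ "{?a1, ?a2}"]) auto
qed

lemma chain_intervals_top:
  assumes "Cs \<subseteq> chain_intervals I" "finite Cs" "Cs \<noteq> {}" "disjoint Cs"
  obtains C D where "C \<in> I" "D \<in> I" "D \<subseteq> C" "C - D \<in> Cs"
    "\<Union>Cs \<subseteq> C" "\<Union>(Cs - {C - D}) \<subseteq> D"
proof -
  \<comment> \<open>Take the piece with the largest upper end; the other pieces avoid it, so lie below its lower end.\<close>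
  have "\<forall>c\<in>Cs. \<exists>C D. C \<in> I \<and> D \<in> I \<and> D \<subseteq> C \<and> c = C - D"
    using assms(1) unfolding chain_intervals_def by blast
  then obtain T B where TB: "\<And>c. c \<in> Cs \<Longrightarrow> T c \<in> I \<and> B c \<in> I \<and> B c \<subseteq> T c \<and> c = T c - B c"
    by metis
  have "subset.chain UNIV (T ` Cs)"
    using TB chain unfolding subset.chain_def by blast
  then have "\<Union>(T ` Cs) \<in> T ` Cs"
    using assms(2,3) by (intro Union_in_chain) auto
  then obtain c0 where c0: "c0 \<in> Cs" "\<Union>(T ` Cs) = T c0"
    by auto
  obtain C D where CD: "C \<in> I" "D \<in> I" "D \<subseteq> C" "c0 = C - D" "C = T c0"
    using TB[OF c0(1)] by blast
  have "\<Union>Cs \<subseteq> C"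
    using TB c0(2) CD(5) by blast
  moreover have "c \<inter> c0 = {}" if "c \<in> Cs - {c0}" for c
    using assms(4) c0(1) that unfolding disjoint_def by blast
  then have "\<Union>(Cs - {c0}) \<subseteq> D"
    using \<open>\<Union>Cs \<subseteq> C\<close> CD(4) by blast
  ultimately show thesis
    using that[OF CD(1-3)] c0(1) unfolding CD(4) by blast
qed

lemma sum_interval_content_eq:
  assumes "Cs \<subseteq> chain_intervals I" "finite Cs" "disjoint Cs" "{} \<notin> Cs"
    and "C \<in> I" "D \<in> I" "D \<subseteq> C" "\<Union>Cs = C - D"
  shows "(\<Sum>c\<in>Cs. interval_content v I c) = v C - v D"
  using assms(2,1,3-)
proof (induction Cs arbitrary: C D rule: finite_remove_induct)
  case empty
  then show ?case by simp
next
  case (remove Cs)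
  obtain C0 D0 where top: "C0 \<in> I" "D0 \<in> I" "D0 \<subseteq> C0" "C0 - D0 \<in> Cs"
    "\<Union>Cs \<subseteq> C0" "\<Union>(Cs - {C0 - D0}) \<subseteq> D0"
    using chain_intervals_top[OF remove.prems(1) remove.hyps(1,2) remove.prems(2)] .
  \<comment> \<open>Only because the top piece is nonempty is its upper end forced to be \<open>C\<close>.\<close>
  have ne: "C0 - D0 \<noteq> {}"
    using top(4) remove.prems(3) by metis
  have sub: "C0 - D0 \<subseteq> C - D" "C - D \<subseteq> C0"
    using top(4,5) remove.prems(7) by auto
  have "C0 \<subseteq> C"
    using ne sub chain[OF top(2) remove.prems(4)] by blast
  moreover have "D \<subseteq> C0"
    using ne sub chain[OF remove.prems(5) top(1)] by blast
  ultimately have "C0 = C"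
    using sub(2) by blast
  have "D \<subseteq> D0"
    using \<open>D \<subseteq> C0\<close> sub(1) by auto
  moreover have "\<Union>(Cs - {C0 - D0}) = \<Union>Cs - (C0 - D0)"
    using top(4,6) by auto
  then have "\<Union>(Cs - {C0 - D0}) = D0 - D"
    using top(3) remove.prems(7) \<open>C0 = C\<close> by auto
  then have "(\<Sum>c\<in>Cs - {C0 - D0}. interval_content v I c) = v D0 - v D"
    using remove.prems top(2) \<open>D \<subseteq> D0\<close>
    by (intro remove.IH[OF top(4)]) (auto intro: pairwise_subset)
  ultimately show ?case
    using sum.remove[OF remove.hyps(1) top(4), of "interval_content v I"]
      interval_content_eq[OF top(1-3), of v] \<open>C0 = C\<close> by simp
qed

end

locale chain_capacity = set_chain I for I :: "'a set set" +
  fixes M :: "'a measure" and v :: "'a set \<Rightarrow> real"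
  assumes chain_in_sets: "I \<subseteq> sets M"
    and nondecreasing: "nondecreasing_on M v"
begin

sublocale intervals: semiring_of_sets "space M" "chain_intervals I"
  using chain_in_sets sets.sets_into_space by (intro semiring_of_sets_chain_intervals) blast

lemma capacity_mono: "A \<in> I \<Longrightarrow> B \<in> I \<Longrightarrow> A \<subseteq> B \<Longrightarrow> v A \<le> v B"
  using nondecreasing chain_in_sets unfolding nondecreasing_on_def by blast

lemma interval_content_nonneg: "c \<in> chain_intervals I \<Longrightarrow> 0 \<le> interval_content v I c"
  by (auto elim!: chain_intervalsE simp: interval_content_eq capacity_mono)

lemma chain_intervals_sets: "chain_intervals I \<subseteq> sets M"
  using chain_in_sets by (auto elim!: chain_intervalsE)

lemma generated_ring_sets: "intervals.generated_ring \<subseteq> sets M"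
  using chain_intervals_sets by (auto elim!: intervals.generated_ringE)

lemma volume_interval_content: "volume (chain_intervals I) (\<lambda>c. ennreal (interval_content v I c))"
proof (rule volumeI)
  fix Cs assume Cs: "Cs \<subseteq> chain_intervals I" "disjoint Cs" "finite Cs" "\<Union>Cs \<in> chain_intervals I"
  then obtain C D where CD: "C \<in> I" "D \<in> I" "D \<subseteq> C" "\<Union>Cs = C - D"
    by (auto elim: chain_intervalsE)
  have "(\<Sum>c\<in>Cs. interval_content v I c) = (\<Sum>c\<in>Cs - {{}}. interval_content v I c)"
    using Cs(3) by (intro sum.mono_neutral_right) (auto simp: interval_content_empty)
  also have "\<dots> = v C - v D"
    using Cs CD by (intro sum_interval_content_eq) (auto intro: pairwise_subset)
  also have "\<dots> = interval_content v I (\<Union>Cs)"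
    using CD by (simp add: interval_content_eq)
  finally show "ennreal (interval_content v I (\<Union>Cs)) = (\<Sum>c\<in>Cs. ennreal (interval_content v I c))"
    using Cs(1) interval_content_nonneg by (subst sum_ennreal) auto
qed (auto simp: interval_content_empty interval_content_nonneg)

lemma interval_content_extension:
  obtains \<mu> where "volume intervals.generated_ring \<mu>"
    "\<And>c. c \<in> chain_intervals I \<Longrightarrow> \<mu> c = ennreal (interval_content v I c)"
  using intervals.extend_volume[OF volume_interval_content] by metis

lemma sum_interval_content_le:
  assumes submodular: "submodular_on M v" and "v {} = 0"
    and "Cs \<subseteq> chain_intervals I" "finite Cs" "disjoint Cs"
  shows "(\<Sum>c\<in>Cs. interval_content v I c) \<le> v (\<Union>Cs)"
  using assms(4,3,5)
proof (induction Cs rule: finite_remove_induct)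
  case empty
  then show ?case
    using \<open>v {} = 0\<close> by simp
next
  case (remove Cs)
  obtain C D where top: "C \<in> I" "D \<in> I" "D \<subseteq> C" "C - D \<in> Cs"
    "\<Union>Cs \<subseteq> C" "\<Union>(Cs - {C - D}) \<subseteq> D"
    using chain_intervals_top[OF remove.prems(1) remove.hyps(1,2) remove.prems(2)] .
  have "\<Union>Cs \<in> sets M"
    using remove.hyps(1) remove.prems(1) chain_intervals_sets by (intro sets.finite_Union) auto
  then have "v (\<Union>Cs \<union> D) + v (\<Union>Cs \<inter> D) \<le> v (\<Union>Cs) + v D"
    using submodular top(2) chain_in_sets unfolding submodular_on_def by blast
  moreover have "\<Union>Cs \<union> D = C" "\<Union>Cs \<inter> D = \<Union>(Cs - {C - D})"
    using top(3-6) by auto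
  moreover have "(\<Sum>c\<in>Cs - {C - D}. interval_content v I c) \<le> v (\<Union>(Cs - {C - D}))"
    using remove.prems by (intro remove.IH[OF top(4)]) (auto intro: pairwise_subset)
  ultimately show ?case
    using sum.remove[OF remove.hyps(1) top(4), of "interval_content v I"]
      interval_content_eq[OF top(1-3), of v] by simp
qed

lemma chain_rep_sum_nonneg: "chain_rep I n C D A \<Longrightarrow> 0 \<le> (\<Sum>i<n. v (C i) - v (D i))"
  unfolding chain_rep_def by (auto intro!: sum_nonneg simp: capacity_mono)

context
  fixes \<mu>
  assumes volume: "volume intervals.generated_ring \<mu>"
    and extends: "\<And>c. c \<in> chain_intervals I \<Longrightarrow> \<mu> c = ennreal (interval_content v I c)"
begin

lemma chain_rep_volume:
  assumes rep: "chain_rep I n C D A"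
  shows "A \<in> intervals.generated_ring" "\<mu> A = ennreal (\<Sum>i<n. v (C i) - v (D i))"
proof -
  have CD: "\<And>i. i < n \<Longrightarrow> C i \<in> I \<and> D i \<in> I \<and> D i \<subseteq> C i"
    and A: "A = (\<Union>i\<in>{..<n}. C i - D i)"
    using rep unfolding chain_rep_def by auto
  have pieces: "\<And>i. i < n \<Longrightarrow> C i - D i \<in> intervals.generated_ring"
    using CD by (auto intro: chain_intervalsI intervals.generated_ringI_Basic)
  have disjoint: "disjoint_family_on (\<lambda>i. C i - D i) {..<n}"
    by (rule chain_rep_disjoint[OF rep])
  show "A \<in> intervals.generated_ring"
    unfolding A using pieces disjoint
    by (intro intervals.generated_ring_disjoint_UNION) (auto simp: disjoint_family_on_disjoint_image)
  then have "\<mu> A = (\<Sum>i<n. \<mu> (C i - D i))"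
    unfolding A using pieces disjoint by (intro volume_finite_additive[OF volume]) auto
  also have "\<dots> = (\<Sum>i<n. ennreal (v (C i) - v (D i)))"
    using CD by (intro sum.cong) (auto simp: extends chain_intervalsI interval_content_eq)
  also have "\<dots> = ennreal (\<Sum>i<n. v (C i) - v (D i))"
    using CD by (intro sum_ennreal) (auto simp: capacity_mono)
  finally show "\<mu> A = ennreal (\<Sum>i<n. v (C i) - v (D i))" .
qed

lemma volume_le_capacity:
  assumes "submodular_on M v" "v {} = 0" and A: "A \<in> intervals.generated_ring"
  shows "\<mu> A \<le> ennreal (v A)"
proof -
  obtain Cs where Cs: "finite Cs" "disjoint Cs" "Cs \<subseteq> chain_intervals I" "A = \<Union>Cs"
    using A by (auto elim: intervals.generated_ringE)
  then have "\<mu> A = (\<Sum>c\<in>Cs. \<mu> c)"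
    using volume A by (auto simp: volume_def intro: intervals.generated_ringI_Basic)
  also have "\<dots> = (\<Sum>c\<in>Cs. ennreal (interval_content v I c))"
    using Cs(3) by (auto intro!: sum.cong simp: extends)
  also have "\<dots> = ennreal (\<Sum>c\<in>Cs. interval_content v I c)"
    using Cs(3) by (auto intro!: sum_ennreal interval_content_nonneg)
  also have "\<dots> \<le> ennreal (v A)"
    using sum_interval_content_le[OF assms(1,2) Cs(3,1,2)] Cs(4) by (simp add: ennreal_leI)
  finally show ?thesis .
qed

lemma countably_additive_volume:
  assumes "submodular_on M v" "v {} = 0" and from_above: "continuous_from_above M v"
  shows "countably_additive intervals.generated_ring \<mu>"
proof -
  interpret ring: ring_of_sets "space M" intervals.generated_ring
    by (rule intervals.generating_ring)
  show ?thesis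
  proof (rule ring.empty_continuous_imp_countably_additive)
    show "positive intervals.generated_ring \<mu>"
      using volume_empty[OF volume] by (simp add: positive_def)
    show "additive intervals.generated_ring \<mu>"
      unfolding additive_def
    proof (intro ballI impI)
      fix x y assume "x \<in> intervals.generated_ring" "y \<in> intervals.generated_ring" "x \<inter> y = {}"
      moreover have "(if b then y else x) \<in> intervals.generated_ring" for b
        using calculation by simp
      ultimately show "\<mu> (x \<union> y) = \<mu> x + \<mu> y"
        using volume_finite_additive[OF volume, of UNIV "\<lambda>b. if b then y else x"]
        by (simp add: UNIV_bool disjoint_family_on_def Int_commute ring.Un)
    qed
    show "\<forall>A\<in>intervals.generated_ring. \<mu> A \<noteq> \<infinity>"
      using volume_le_capacity[OF assms(1,2)] by (metis ennreal_neq_top top_unique infinity_ennreal_def)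
  next
    fix A :: "nat \<Rightarrow> 'a set"
    assume A: "range A \<subseteq> intervals.generated_ring" "decseq A" "(\<Inter>i. A i) = {}"
    then have "range A \<subseteq> sets M"
      using generated_ring_sets by blast
    then have "(\<lambda>i. v (A i)) \<longlonglongrightarrow> v (\<Inter>i. A i)"
      using from_above A(2) unfolding continuous_from_above_def by blast
    then have lim: "(\<lambda>i. ennreal (v (A i))) \<longlonglongrightarrow> 0"
      using A(3) \<open>v {} = 0\<close> tendsto_ennrealI[of _ 0] by simp
    have le: "\<forall>\<^sub>F i in sequentially. \<mu> (A i) \<le> ennreal (v (A i))"
      using A(1) volume_le_capacity[OF assms(1,2)] by (intro always_eventually) blast
    show "(\<lambda>i. \<mu> (A i)) \<longlonglongrightarrow> 0"
      using tendsto_sandwich[OF _ le tendsto_const lim] by simp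
  qed
qed

end

lemma mu_chain_rep:
  assumes rep: "chain_rep I n C D A"
  shows "mu_chain v I A = (\<Sum>i<n. v (C i) - v (D i))"
proof -
  obtain \<mu> where \<mu>: "volume intervals.generated_ring \<mu>"
    "\<And>c. c \<in> chain_intervals I \<Longrightarrow> \<mu> c = ennreal (interval_content v I c)"
    using interval_content_extension by blast
  have "s = (\<Sum>i<n. v (C i) - v (D i))"
    if rep': "chain_rep I n' C' D' A" and s: "s = (\<Sum>i<n'. v (C' i) - v (D' i))" for n' C' D' s
    using chain_rep_volume[OF \<mu> rep] chain_rep_volume[OF \<mu> rep']
      chain_rep_sum_nonneg[OF rep] chain_rep_sum_nonneg[OF rep'] s by simp
  then show ?thesis
    unfolding mu_chain_def using rep by (intro some_equality) blast+
qed

lemma sigma_additive_mu_chain: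
  assumes "submodular_on M v" "v {} = 0" "continuous_from_above M v"
  shows "sigma_additive_on (chain_algebra I) (mu_chain v I)"
proof -
  obtain \<mu> where \<mu>: "volume intervals.generated_ring \<mu>"
    "\<And>c. c \<in> chain_intervals I \<Longrightarrow> \<mu> c = ennreal (interval_content v I c)"
    using interval_content_extension by blast
  have on_chain_algebra: "X \<in> intervals.generated_ring \<and> \<mu> X = ennreal (mu_chain v I X) \<and> 0 \<le> mu_chain v I X"
    if "X \<in> chain_algebra I" for X
    using that chain_rep_volume[OF \<mu>] mu_chain_rep chain_rep_sum_nonneg
    unfolding chain_algebra_def by auto
  show ?thesis
    unfolding sigma_additive_on_def
  proof (intro allI impI)
    fix A :: "nat \<Rightarrow> 'a set"
    assume A: "range A \<subseteq> chain_algebra I" "disjoint_family A" "(\<Union>i. A i) \<in> chain_algebra I"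
    have Ai: "A i \<in> chain_algebra I" for i
      using A(1) by blast
    have "(\<Sum>i. \<mu> (A i)) = \<mu> (\<Union>i. A i)"
      using countably_additive_volume[OF \<mu> assms] on_chain_algebra Ai A(2,3)
      unfolding countably_additive_def by blast
    then have "(\<lambda>i. ennreal (mu_chain v I (A i))) sums ennreal (mu_chain v I (\<Union>i. A i))"
      using on_chain_algebra[OF Ai] on_chain_algebra[OF A(3)] summable_sums[OF summableI, of "\<lambda>i. \<mu> (A i)"] by simp
    then show "(\<lambda>i. mu_chain v I (A i)) sums mu_chain v I (\<Union>i. A i)"
      using on_chain_algebra[OF Ai] on_chain_algebra[OF A(3)] by (subst (asm) sums_ennreal) auto
  qed
qed


lemma mu_chain_Diff:
  assumes "X \<in> I" "Y \<in> I" "Y \<subseteq> X"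
  shows "X - Y \<in> chain_algebra I" "mu_chain v I (X - Y) = v X - v Y"
proof -
  have "chain_rep I 1 (\<lambda>_. X) (\<lambda>_. Y) (X - Y)"
    using assms unfolding chain_rep_def by (simp add: lessThan_Suc)
  then show "X - Y \<in> chain_algebra I" "mu_chain v I (X - Y) = v X - v Y"
    unfolding chain_algebra_def by (auto simp: mu_chain_rep)
qed

lemma sums_Diff_chain:
  assumes "sigma_additive_on (chain_algebra I) (mu_chain v I)"
    and "\<And>n. X n \<in> I" "\<And>n. Y n \<in> I" "\<And>n. Y n \<subseteq> X n" "disjoint_family (\<lambda>n. X n - Y n)"
    and "X' \<in> I" "Y' \<in> I" "Y' \<subseteq> X'" "(\<Union>n. X n - Y n) = X' - Y'"
  shows "(\<lambda>n. v (X n) - v (Y n)) sums (v X' - v Y')"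
proof -
  have "range (\<lambda>n. X n - Y n) \<subseteq> chain_algebra I" "(\<Union>n. X n - Y n) \<in> chain_algebra I"
    using assms(2-4,6-9) mu_chain_Diff(1) by auto
  then have "(\<lambda>n. mu_chain v I (X n - Y n)) sums mu_chain v I (\<Union>n. X n - Y n)"
    using assms(1,5) unfolding sigma_additive_on_def by blast
  then show ?thesis
    using assms(2-4,6-9) by (simp add: mu_chain_Diff(2))
qed

end

lemma chain_generatorsD:
  assumes "I \<in> chain_generators M"
  shows "I \<subseteq> sets M" "\<And>A B. A \<in> I \<Longrightarrow> B \<in> I \<Longrightarrow> A \<subseteq> B \<or> B \<subseteq> A"
    "{} \<in> I" "space M \<in> I" "sigma_sets (space M) I = sets M"
  using assms unfolding chain_generators_def by auto

lemma chain_capacityI: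
  assumes "I \<in> chain_generators M" "nondecreasing_on M v"
  shows "chain_capacity I M v"
  using chain_generatorsD[OF assms(1)] assms(2) by unfold_locales auto

lemma chain_generators_complement:
  assumes "I \<in> chain_generators M"
  shows "(\<lambda>A. space M - A) ` I \<in> chain_generators M"
proof -
  note I = chain_generatorsD[OF assms]
  have "X \<in> sigma_sets (space M) ((\<lambda>A. space M - A) ` I)" if "X \<in> I" for X
  proof -
    have "space M - (space M - X) = X"
      using that I(1) sets.sets_into_space by blast
    then show ?thesis
      using that by (metis sigma_sets.Basic sigma_sets.Compl image_eqI)
  qed
  then have "sets M \<subseteq> sigma_sets (space M) ((\<lambda>A. space M - A) ` I)"
    unfolding I(5)[symmetric] by (intro sigma_sets_mono) blast
  moreover have "(\<lambda>A. space M - A) ` I \<subseteq> sets M"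
    using I(1) by blast
  moreover have "\<forall>A\<in>I. \<forall>B\<in>I. space M - A \<subseteq> space M - B \<or> space M - B \<subseteq> space M - A"
    using I(2) by blast
  moreover have "{} \<in> (\<lambda>A. space M - A) ` I" "space M \<in> (\<lambda>A. space M - A) ` I"
    using I(3,4) by (auto intro!: image_eqI)
  ultimately show ?thesis
    using sets.sigma_sets_subset[of "(\<lambda>A. space M - A) ` I" M]
    unfolding chain_generators_def by auto
qed

text \<open>Each gap \<open>U k - L k\<close> is filled with the traces of \<open>I\<close> on it.\<close>
definition gap_refinement :: "'a set set \<Rightarrow> (nat \<Rightarrow> 'a set) \<Rightarrow> (nat \<Rightarrow> 'a set) \<Rightarrow> 'a set set" where
  "gap_refinement I L U = {L k \<union> (B \<inter> U k) | k B. B \<in> I}"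

lemma gap_refinement_chain:
  assumes "\<And>A B. A \<in> I \<Longrightarrow> B \<in> I \<Longrightarrow> A \<subseteq> B \<or> B \<subseteq> A" and LU: "\<And>k. L k \<subseteq> U k"
    and ordered: "\<And>k k'. k < k' \<Longrightarrow> U k \<subseteq> L k' \<or> U k' \<subseteq> L k"
    and "X \<in> gap_refinement I L U" "Y \<in> gap_refinement I L U"
  shows "X \<subseteq> Y \<or> Y \<subseteq> X"
proof -
  obtain k B where X: "X = L k \<union> (B \<inter> U k)" "B \<in> I"
    using \<open>X \<in> gap_refinement I L U\<close> unfolding gap_refinement_def by blast
  obtain k' B' where Y: "Y = L k' \<union> (B' \<inter> U k')" "B' \<in> I"
    using \<open>Y \<in> gap_refinement I L U\<close> unfolding gap_refinement_def by blast
  have bounds: "L k \<subseteq> X" "X \<subseteq> U k" "L k' \<subseteq> Y" "Y \<subseteq> U k'"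
    using X(1) Y(1) LU by auto
  consider "k < k'" | "k = k'" | "k' < k"
    by linarith
  then show ?thesis
  proof cases
    case 1
    then show ?thesis
      using ordered[OF 1] bounds by blast
  next
    case 2
    then show ?thesis
      using assms(1)[OF X(2) Y(2)] X(1) Y(1) by blast
  next
    case 3
    then show ?thesis
      using ordered[OF 3] bounds by blast
  qed
qed

lemma gap_refinement_generates:
  assumes "B \<in> I" "B \<subseteq> \<Omega>" "\<Omega> \<subseteq> (\<Union>k. U k - L k)" "{} \<in> I"
    and "gap_refinement I L U \<subseteq> Pow \<Omega>"
  shows "B \<in> sigma_sets \<Omega> (gap_refinement I L U)"
proof -
  interpret generated: sigma_algebra \<Omega> "sigma_sets \<Omega> (gap_refinement I L U)"
    using assms(5) by (rule sigma_algebra_sigma_sets)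
  have "L k \<union> (B \<inter> U k) \<in> gap_refinement I L U" "L k \<union> ({} \<inter> U k) \<in> gap_refinement I L U" for k
    using assms(1,4) unfolding gap_refinement_def by blast+
  then have "(\<Union>k. (L k \<union> (B \<inter> U k)) - L k) \<in> sigma_sets \<Omega> (gap_refinement I L U)"
    by (intro generated.countable_nat_UN image_subsetI generated.Diff sigma_sets.Basic) simp_all
  moreover have "(\<Union>k. (L k \<union> (B \<inter> U k)) - L k) = B"
    using assms(2,3) by blast
  ultimately show ?thesis
    by simp
qed

lemma chain_generators_refine:
  fixes L U :: "nat \<Rightarrow> 'a set"
  assumes I0: "I0 \<in> chain_generators M"
    and sets: "\<And>k. L k \<in> sets M" "\<And>k. U k \<in> sets M" and LU: "\<And>k. L k \<subseteq> U k"
    and ordered: "\<And>k k'. k < k' \<Longrightarrow> U k \<subseteq> L k' \<or> U k' \<subseteq> L k"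
    and cover: "space M \<subseteq> (\<Union>k. U k - L k)"
  obtains I where "I \<in> chain_generators M" "\<And>k. L k \<in> I" "\<And>k. U k \<in> I"
proof -
  note I0_facts = chain_generatorsD[OF I0]
  define I where "I = insert {} (insert (space M) (gap_refinement I0 L U))"
  have I_sets: "I \<subseteq> sets M"
    using sets I0_facts(1) unfolding I_def gap_refinement_def by auto
  then have I_space: "Z \<subseteq> space M" if "Z \<in> I" for Z
    using that sets.sets_into_space by blast
  have "X \<subseteq> Y \<or> Y \<subseteq> X" if "X \<in> I" "Y \<in> I" for X Y
  proof (cases "X \<in> gap_refinement I0 L U \<and> Y \<in> gap_refinement I0 L U")
    case True
    then show ?thesis
      using gap_refinement_chain[where I = I0 and L = L and U = U, OF I0_facts(2) LU ordered]
      by blast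
  next
    case False
    then have "X \<in> {{}, space M} \<or> Y \<in> {{}, space M}"
      using that unfolding I_def by blast
    then show ?thesis
      using I_space[OF that(1)] I_space[OF that(2)] by blast
  qed
  moreover have "B \<in> sigma_sets (space M) I" if "B \<in> I0" for B
  proof -
    have "B \<subseteq> space M"
      using that I0_facts(1) sets.sets_into_space by blast
    then have "B \<in> sigma_sets (space M) (gap_refinement I0 L U)"
      using that cover I0_facts(3) I_space unfolding I_def by (intro gap_refinement_generates) auto
    then show ?thesis
      using sigma_sets_mono'[of "gap_refinement I0 L U" I] unfolding I_def by blast
  qed
  then have "sets M \<subseteq> sigma_sets (space M) I"
    unfolding I0_facts(5)[symmetric] by (intro sigma_sets_mono) blast
  ultimately have "I \<in> chain_generators M"
    using I_sets sets.sigma_sets_subset[OF I_sets] unfolding chain_generators_def I_def by auto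
  moreover have "L k \<in> I" "U k \<in> I" for k
  proof -
    have "L k \<union> ({} \<inter> U k) \<in> I" "L k \<union> (space M \<inter> U k) \<in> I"
      using I0_facts(3,4) unfolding I_def gap_refinement_def by blast+
    moreover have "L k \<union> (space M \<inter> U k) = U k"
      using LU[of k] sets(2)[THEN sets.sets_into_space] by auto
    ultimately show "L k \<in> I" "U k \<in> I"
      by simp_all
  qed
  ultimately show thesis
    using that by blast
qed

lemma incseq_chain_generator:
  assumes "chain_generators M \<noteq> {}" "range A \<subseteq> sets M" "incseq A"
  obtains I where "I \<in> chain_generators M" "range A \<subseteq> I" "(\<Union>n. A n) \<in> I"
proof -
  obtain I0 where I0: "I0 \<in> chain_generators M"
    using assms(1) by blast
  define L where "L k = (case k of 0 \<Rightarrow> \<Union>n. A n | Suc m \<Rightarrow> \<Union>i<m. A i)" for k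
  define U where "U k = (case k of 0 \<Rightarrow> space M | Suc m \<Rightarrow> A m)" for k
  \<comment> \<open>The gaps \<open>U k - L k\<close> are \<open>space M - (\<Union>n. A n)\<close> and the increments \<open>A m - (\<Union>i<m. A i)\<close>.\<close>
  have A_sets: "A n \<in> sets M" for n
    using assms(2) by blast
  have sets: "L k \<in> sets M" "U k \<in> sets M" for k
    using assms(2) A_sets by (cases k; simp add: L_def U_def sets.countable_nat_UN sets.finite_UN)+
  have LU: "L k \<subseteq> U k" for k
  proof (cases k)
    case 0
    then show ?thesis
      using A_sets[THEN sets.sets_into_space] by (auto simp: L_def U_def)
  next
    case (Suc m)
    have "A i \<subseteq> A m" if "i < m" for i
      using assms(3) that by (simp add: incseqD)
    then show ?thesis
      using Suc by (auto simp: L_def U_def)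
  qed
  have ordered: "U k \<subseteq> L k' \<or> U k' \<subseteq> L k" if less: "k < k'" for k k'
  proof -
    obtain m' where m': "k' = Suc m'"
      using less by (cases k') auto
    show ?thesis
    proof (cases k)
      case 0
      then show ?thesis
        using m' by (auto simp: L_def U_def)
    next
      case (Suc m)
      then show ?thesis
        using m' less by (auto simp: L_def U_def)
    qed
  qed
  have cover: "space M \<subseteq> (\<Union>k. U k - L k)"
  proof
    fix x assume x: "x \<in> space M"
    show "x \<in> (\<Union>k. U k - L k)"
    proof (cases "\<exists>n. x \<in> A n")
      case True
      then obtain m where "x \<in> A m" "\<forall>i<m. x \<notin> A i"
        using exists_least_iff[of "\<lambda>n. x \<in> A n"] by blast
      then have "x \<in> U (Suc m) - L (Suc m)"
        by (simp add: U_def L_def)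
      then show ?thesis
        by blast
    next
      case False
      then have "x \<in> U 0 - L 0"
        using x by (simp add: U_def L_def)
      then show ?thesis
        by blast
    qed
  qed
  obtain I where I: "I \<in> chain_generators M" "\<And>k. L k \<in> I" "\<And>k. U k \<in> I"
    using chain_generators_refine[OF I0 sets LU ordered cover] by blast
  have "A n \<in> I" for n
    using I(3)[of "Suc n"] by (simp add: U_def)
  moreover have "(\<Union>n. A n) \<in> I"
    using I(2)[of 0] by (simp add: L_def)
  ultimately show thesis
    using that I(1) by blast
qed

lemma decseq_chain_generator:
  assumes "chain_generators M \<noteq> {}" "range A \<subseteq> sets M" "decseq A"
  obtains I where "I \<in> chain_generators M" "range A \<subseteq> I" "(\<Inter>n. A n) \<in> I"
proof -
  have "range (\<lambda>n. space M - A n) \<subseteq> sets M" "incseq (\<lambda>n. space M - A n)"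
    using assms(2,3) by (auto simp: decseq_def incseq_def)
  then obtain I where I: "I \<in> chain_generators M" "range (\<lambda>n. space M - A n) \<subseteq> I"
    "(\<Union>n. space M - A n) \<in> I"
    using incseq_chain_generator[OF assms(1)] by blast
  have A_space: "A n \<subseteq> space M" for n
    using assms(2) sets.sets_into_space by blast
  then have "range A \<subseteq> (\<lambda>X. space M - X) ` I"
    using I(2) by (auto intro!: image_eqI[where x = "space M - A _"])
  moreover have "(\<Inter>n. A n) \<in> (\<lambda>X. space M - X) ` I"
    using A_space I(3) by (intro image_eqI[where x = "\<Union>n. space M - A n"]) auto
  ultimately show thesis
    using that chain_generators_complement[OF I(1)] by blast
qed

lemma incseq_UN_Suc_Diff:
  assumes "incseq A"
  shows "(\<Union>n. A (Suc n) - A n) = (\<Union>n. A n) - A 0"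
proof -
  have "x \<in> (\<Union>n. A (Suc n) - A n)" if "x \<in> A m" "x \<notin> A 0" for x m
    using that by (induction m) auto
  moreover have "A 0 \<subseteq> A n" for n
    using assms by (simp add: incseqD)
  ultimately show ?thesis
    by blast
qed

lemma decseq_UN_Diff_Suc:
  assumes "decseq A"
  shows "(\<Union>n. A n - A (Suc n)) = A 0 - (\<Inter>n. A n)"
proof -
  have "x \<in> (\<Union>n. A n - A (Suc n))" if "x \<notin> A m" "x \<in> A 0" for x m
    using that by (induction m) auto
  moreover have "A n \<subseteq> A 0" for n
    using assms by (simp add: decseqD)
  ultimately show ?thesis
    by blast
qed

lemma continuous_capacity_imp_continuous_from_below:
  assumes "chain_generators M \<noteq> {}" "nondecreasing_on M v" "continuous_capacity M v"
  shows "continuous_from_below M v"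
  unfolding continuous_from_below_def
proof (intro allI impI)
  fix A :: "nat \<Rightarrow> 'a set" assume A: "range A \<subseteq> sets M" "incseq A"
  obtain I where I: "I \<in> chain_generators M" "range A \<subseteq> I" "(\<Union>n. A n) \<in> I"
    using incseq_chain_generator[OF assms(1) A] by blast
  interpret chain_capacity I M v
    by (rule chain_capacityI[OF I(1) assms(2)])
  have "(\<lambda>n. v (A (Suc n)) - v (A n)) sums (v (\<Union>n. A n) - v (A 0))"
    using assms(3) I A(2)
    by (intro sums_Diff_chain incseq_UN_Suc_Diff)
       (auto simp: continuous_capacity_def incseq_SucD disjoint_family_Suc)
  then have "(\<lambda>n. v (A n) - v (A 0)) \<longlonglongrightarrow> v (\<Union>n. A n) - v (A 0)"
    by (simp add: sums_def sum_lessThan_telescope[of "\<lambda>n. v (A n)"])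
  then show "(\<lambda>n. v (A n)) \<longlonglongrightarrow> v (\<Union>n. A n)"
    using tendsto_add[OF _ tendsto_const[of "v (A 0)"]] by fastforce
qed

lemma continuous_capacity_imp_continuous_from_above:
  assumes "chain_generators M \<noteq> {}" "nondecreasing_on M v" "continuous_capacity M v"
  shows "continuous_from_above M v"
  unfolding continuous_from_above_def
proof (intro allI impI)
  fix A :: "nat \<Rightarrow> 'a set" assume A: "range A \<subseteq> sets M" "decseq A"
  obtain I where I: "I \<in> chain_generators M" "range A \<subseteq> I" "(\<Inter>n. A n) \<in> I"
    using decseq_chain_generator[OF assms(1) A] by blast
  interpret chain_capacity I M v
    by (rule chain_capacityI[OF I(1) assms(2)])
  have "disjoint_family (\<lambda>n. - A (Suc n) - - A n)"
    using A(2) by (intro disjoint_family_Suc) (simp add: decseq_SucD)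
  then have "disjoint_family (\<lambda>n. A n - A (Suc n))"
    by (simp add: Diff_eq Int_commute)
  then have "(\<lambda>n. v (A n) - v (A (Suc n))) sums (v (A 0) - v (\<Inter>n. A n))"
    using assms(3) I A(2)
    by (intro sums_Diff_chain decseq_UN_Diff_Suc) (auto simp: continuous_capacity_def decseq_SucD)
  then have "(\<lambda>n. v (A 0) - v (A n)) \<longlonglongrightarrow> v (A 0) - v (\<Inter>n. A n)"
    by (simp add: sums_def sum_lessThan_telescope'[of "\<lambda>n. v (A n)"])
  then show "(\<lambda>n. v (A n)) \<longlonglongrightarrow> v (\<Inter>n. A n)"
    using tendsto_diff[OF tendsto_const[of "v (A 0)"]] by fastforce
qed

lemma continuous_from_above_imp_continuous_capacity:
  assumes "nondecreasing_on M v" "submodular_on M v" "v {} = 0" "continuous_from_above M v"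
  shows "continuous_capacity M v"
  unfolding continuous_capacity_def
proof
  fix I assume "I \<in> chain_generators M"
  then interpret chain_capacity I M v
    using assms(1) by (rule chain_capacityI)
  show "sigma_additive_on (chain_algebra I) (mu_chain v I)"
    using assms(2-4) by (rule sigma_additive_mu_chain)
qed

theorem proposition2:
  fixes M :: "'a measure" and v :: "'a set \<Rightarrow> real"
  assumes "chain_generators M \<noteq> {}"
    and "nondecreasing_on M v" and "submodular_on M v" and "v {} = 0"
  shows "continuous_capacity M v \<longleftrightarrow>
    ((\<forall>A. range A \<subseteq> sets M \<longrightarrow> incseq A \<longrightarrow> (\<lambda>n. v (A n)) \<longlonglongrightarrow> v (\<Union>n. A n)) \<and>
     (\<forall>A. range A \<subseteq> sets M \<longrightarrow> decseq A \<longrightarrow> (\<lambda>n. v (A n)) \<longlonglongrightarrow> v (\<Inter>n. A n)))"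
proof -
  have "continuous_capacity M v \<longleftrightarrow> continuous_from_below M v \<and> continuous_from_above M v"
    using assms continuous_capacity_imp_continuous_from_below
      continuous_capacity_imp_continuous_from_above continuous_from_above_imp_continuous_capacity
    by blast
  then show ?thesis
    unfolding continuous_from_below_def continuous_from_above_def .
qed

end
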